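(* Let $N\ge 0$ be an integer, and let $Q_K(f)=\sum_{k=1}^K w_k f(\xi_k)$ be a quadrature rule on the unit sphere $S^2\subset\mathbb{R}^3$ with real weights $w_k$ and nodes $\xi_k\in S^2$ having polar coordinates $(\theta_k,\phi_k)$, i.e. $\xi_k=(\sin\theta_k\cos\phi_k,\sin\theta_k\sin\phi_k,\cos\theta_k)$. Suppose: (i) for every $k$ there is a unique $j$ such that $\xi_j$ is the point with polar coordinates $(\theta_k,\phi_k+\pi)$ (i.e. $\xi_j=R_z\xi_k$ where $R_z(x,y,z)=(-x,-y,z)$), and $w_j=w_k$; (ii) for every $k$ there is a unique $j$ such that $\xi_j$ is the point with coordinates $(\theta_k+\pi,\pi-\phi_k)$ under the parametrization $(\theta,\phi)\mapsto(\sin\theta\cos\phi,\sin\theta\sin\phi,\cos\theta)$ (i.e. $\xi_j=R_x\xi_k$ where $R_x(x,y,z)=(x,-y,-z)$), and $w_j=w_k$. Then the system $$\sum_{k=1}^K w_k Y_n^m(\theta_k,\phi_k)=\sqrt{4\pi}\,\delta_{n0}\delta_{m0}\quad\text{for all integers } |m|\le n\le N$$ holds if and only if the following real system holds: $$\operatorname{Re}\sum_{k=1}^K w_k Y_n^m(\theta_k,\phi_k)=\sqrt{4\pi}\,\delta_{n0}\delta_{m0}\quad\text{for all }(m,n)\text{ with } m,n \text{ even},\ 0\le m\le n\le N,$$ $$\operatorname{Im}\sum_{k=1}^K w_k Y_n^m(\theta_k,\phi_k)=0\quad\text{for all }(m,n)\text{ with } m \text{ even},\ n\text{ odd},\ 0<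 m\le n\le N.$$
   Context: For integers $|m|\le n$, the spherical harmonic of degree $n$ and order $m$ is $$Y_n^m(\theta,\phi)=(-1)^m\sqrt{\frac{2n+1}{4\pi}\frac{(n-m)!}{(n+m)!}}\,P_n^m(\cos\theta)\,e^{im\phi},$$ where $P_n^m$ is the associated Legendre function (with the standard definition for negative $m$), regarded as a function on $S^2$ via polar coordinates $(\theta,\phi)\in[0,\pi]\times[0,2\pi)$. These satisfy $\int_{S^2}Y_n^m\,d\sigma=\sqrt{4\pi}\,\delta_{n0}\delta_{m0}$, so the first system in the claim expresses that $Q_K$ integrates exactly all spherical harmonics of degree at most $N$. *)

theory Defs
  imports Complex_Main "HOL-Computational_Algebra.Polynomial"
begin

text \<open>Associated Legendre function P_n^m (no Condon-Shortley phase; that phase is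
  the explicit (-1)^m factor in the spherical harmonic).\<close>

definition assoc_legendre_nonneg :: "nat \<Rightarrow> nat \<Rightarrow> real \<Rightarrow> real" where
  "assoc_legendre_nonneg n m x =
     sqrt (1 - x\<^sup>2) ^ m *
     poly ((pderiv ^^ (n + m)) ([:-1, 0, 1:] ^ n)) x / (2 ^ n * fact n)"

definition assoc_legendre :: "nat \<Rightarrow> int \<Rightarrow> real \<Rightarrow> real" where
  "assoc_legendre n m x =
     (if m \<ge> 0 then assoc_legendre_nonneg n (nat m) x
      else (-1) ^ nat (-m) * (fact (n - nat (-m)) / fact (n + nat (-m)))
             * assoc_legendre_nonneg n (nat (-m)) x)"

definition sph_harm :: "nat \<Rightarrow> int \<Rightarrow> real \<Rightarrow> real \<Rightarrow> complex" where
  "sph_harm n m \<theta> \<phi> =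
     complex_of_real ((-1) powi m *
       sqrt ((2 * real n + 1) / (4 * pi) * (fact (nat (int n - m)) / fact (nat (int n + m))))
       * assoc_legendre n m (cos \<theta>))
     * cis (real_of_int m * \<phi>)"

definition sph_point :: "real \<Rightarrow> real \<Rightarrow> real \<times> real \<times> real" where
  "sph_point \<theta> \<phi> = (sin \<theta> * cos \<phi>, sin \<theta> * sin \<phi>, cos \<theta>)"

definition Rz :: "real \<times> real \<times> real \<Rightarrow> real \<times> real \<times> real" where
  "Rz p = (case p of (x, y, z) \<Rightarrow> (-x, -y, z))"

definition Rx :: "real \<times> real \<times> real \<Rightarrow> real \<times> real \<times> real" where
  "Rx p = (case p of (x, y, z) \<Rightarrow> (x, -y, -z))"

end

theory Submission imports Defs begin

(* For 0 <= m <= n the spherical harmonic Y_n^m, restricted to the sphere, is a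
   polynomial in Cartesian coordinates:  Y_n^m(x,y,z) = c(n,m) * D^(n+m)[(z^2-1)^n](z) * (x+iy)^m.
   The reflection R_z multiplies (x+iy)^m by (-1)^m; the reflection R_x conjugates x+iy and, since
   the (n+m)-th derivative of the even polynomial (z^2-1)^n has parity (-1)^(n+m), multiplies the
   harmonic by (-1)^(n+m) after conjugation.  A quadrature sum that is invariant under an
   involutive symmetry of its nodes and weights equals the sum of the reflected integrand, so each
   moment T = Q_K(Y_n^m) satisfies T = (-1)^m T and T = (-1)^(n+m) conj T (and T is real for m = 0).
   Such a number equals its target iff the stated real or imaginary part does.  Finally the
   identity Y_n^(-m) = (-1)^m conj Y_n^m reduces the full system to orders m >= 0.
   The file develops: parity of Legendre derivatives, the Cartesian form and its reflection laws,
   the negative-order identity, symmetric quadrature sums, two bookkeeping lemmas on moments,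
   and finally the theorem. *)

lemma poly_pderiv_parity:
  fixes p :: "real poly"
  assumes "\<And>x. poly p (-x) = s * poly p x"
  shows "poly (pderiv p) (-x) = - s * poly (pderiv p) x"
proof -
  have reflected: "((\<lambda>x. poly p (-x)) has_real_derivative (poly (pderiv p) (-x) * -1)) (at x)"
    by (rule DERIV_chain2[OF poly_DERIV]) (auto intro!: derivative_eq_intros)
  have scaled: "((\<lambda>x. s * poly p x) has_real_derivative s * poly (pderiv p) x) (at x)"
    by (intro DERIV_cmult poly_DERIV)
  have "(\<lambda>x. poly p (-x)) = (\<lambda>x. s * poly p x)" using assms by auto
  with reflected scaled have "poly (pderiv p) (-x) * -1 = s * poly (pderiv p) x"
    using DERIV_unique by metis
  then show ?thesis by simp
qed

lemma legendre_deriv_parity: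
  "poly ((pderiv ^^ k) ([:-1,0,1:]^n)) (-x) = (-1)^k * poly ((pderiv ^^ k) ([:-1,0,1:]^n)) (x::real)"
proof (induction k arbitrary: x)
  case 0
  then show ?case by (simp add: poly_power)
next
  case (Suc k)
  then show ?case
    using poly_pderiv_parity[of "(pderiv ^^ k) ([:-1,0,1:]^n)" "(-1)^k" x] by simp
qed

section \<open>Spherical harmonics of nonnegative order in Cartesian coordinates\<close>

definition harm_coeff :: "nat \<Rightarrow> nat \<Rightarrow> real" where
  "harm_coeff n m =
     (-1)^m * sqrt ((2 * real n + 1) / (4 * pi) * (fact (n - m) / fact (n + m))) / (2^n * fact n)"

text \<open>The polynomial on R^3 whose restriction to the sphere is Y_n^m (for m >= 0).\<close>
definition harm_cart :: "nat \<Rightarrow> nat \<Rightarrow> real \<times> real \<times> real \<Rightarrow> complex" where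
  "harm_cart n m p = (case p of (x, y, z) \<Rightarrow>
     complex_of_real (harm_coeff n m * poly ((pderiv ^^ (n + m)) ([:-1,0,1:]^n)) z) * Complex x y ^ m)"

text \<open>On the sphere (with 0 <= theta <= pi, so that sin theta = sqrt(1 - cos^2 theta)) both agree.\<close>
lemma sph_harm_eq_harm_cart:
  assumes "0 \<le> \<theta>" "\<theta> \<le> pi"
  shows "sph_harm n (int m) \<theta> \<phi> = harm_cart n m (sph_point \<theta> \<phi>)"
proof -
  have "sin \<theta> \<ge> 0" using assms by (simp add: sin_ge_zero)
  then have sin_eq: "sqrt (1 - (cos \<theta>)\<^sup>2) = sin \<theta>"
    by (simp add: sin_squared_eq[symmetric])
  have polar: "Complex (sin \<theta> * cos \<phi>) (sin \<theta> * sin \<phi>) = complex_of_real (sin \<theta>) * cis \<phi>"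
    by (simp add: complex_eq_iff)
  have "nat (int n + int m) = n + m" "nat (int n - int m) = n - m"
    by (simp_all add: nat_add_distrib nat_diff_distrib')
  then show ?thesis
    unfolding sph_harm_def harm_cart_def sph_point_def assoc_legendre_def
      assoc_legendre_nonneg_def harm_coeff_def
    by (simp add: sin_eq polar DeMoivre power_mult_distrib)
qed

lemma harm_cart_Rz: "harm_cart n m (Rz p) = (-1)^m * harm_cart n m p"
proof -
  obtain x y z where p: "p = (x, y, z)" by (cases p) auto
  have negate: "Complex (-x) (-y) = - Complex x y" by (simp add: complex_eq_iff)
  have "Complex (-x) (-y) ^ m = (-1)^m * Complex x y ^ m" unfolding negate by (rule power_minus)
  then show ?thesis by (simp add: p Rz_def harm_cart_def)
qed

lemma harm_cart_Rx: "harm_cart n m (Rx p) = (-1)^(n + m) * cnj (harm_cart n m p)"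
proof -
  obtain x y z where p: "p = (x, y, z)" by (cases p) auto
  have "Complex x (-y) = cnj (Complex x y)" by (simp add: complex_eq_iff)
  then show ?thesis by (simp add: p Rx_def harm_cart_def legendre_deriv_parity)
qed

lemma harm_cart_order0_real: "Im (harm_cart n 0 p) = 0"
  by (cases p) (simp add: harm_cart_def)

lemma sqrt_normalisation_flip:
  fixes a r :: real
  assumes "r > 0"
  shows "sqrt (a * (1 / r)) * r = sqrt (a * r)"
proof -
  have "sqrt (a * (1 / r)) * r = sqrt (a / r) * sqrt (r^2)" using assms by simp
  also have "\<dots> = sqrt (a / r * r^2)" by (simp only: real_sqrt_mult)
  also have "a / r * r^2 = a * r" using assms by (simp add: power2_eq_square)
  finally show ?thesis .
qed

text \<open>Y_n^(-m) = (-1)^m conj Y_n^m: the factorial ratio (n-m)!/(n+m)! in the definition of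
  P_n^(-m) converts the normalisation constant of order -m into that of order m.\<close>
lemma sph_harm_neg_order:
  "sph_harm n (- int m) \<theta> \<phi> = (-1)^m * cnj (sph_harm n (int m) \<theta> \<phi>)"
proof (cases "m = 0")
  case True
  then show ?thesis by (simp add: sph_harm_def)
next
  case False
  define a where "a = (2 * real n + 1) / (4 * pi)"
  define r where "r = (fact (n - m) / fact (n + m) :: real)"
  define A where "A = assoc_legendre_nonneg n m (cos \<theta>)"
  have flip: "sqrt (a * (fact (n + m) / fact (n - m))) * r = sqrt (a * r)"
    using sqrt_normalisation_flip[of r a] unfolding r_def by simp
  have nats: "nat (int n + int m) = n + m" "nat (int n - int m) = n - m"
    "nat (int n - - int m) = n + m" "nat (int n + - int m) = n - m"
    by (simp_all add: nat_add_distrib nat_diff_distrib')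
  have neg: "sph_harm n (- int m) \<theta> \<phi> = complex_of_real
      ((-1)^m * sqrt (a * (fact (n + m) / fact (n - m))) * ((-1)^m * r * A)) * cis (- (real m * \<phi>))"
    unfolding sph_harm_def assoc_legendre_def a_def r_def A_def using False
    by (simp add: nats power_int_def)
  have signs: "(-1::real)^m * sqrt (a * (fact (n + m) / fact (n - m))) * ((-1)^m * r * A)
      = ((-1)^m * (-1)^m) * (sqrt (a * (fact (n + m) / fact (n - m))) * r) * A"
    by (simp add: algebra_simps)
  have pos: "sph_harm n (int m) \<theta> \<phi> = complex_of_real ((-1)^m * sqrt (a * r) * A) * cis (real m * \<phi>)"
    unfolding sph_harm_def assoc_legendre_def a_def r_def A_def using False
    by (simp add: nats power_int_def)
  show ?thesis
    unfolding neg pos signs flip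
    by (simp add: cis_cnj power_mult_distrib[symmetric] mult.assoc[symmetric])
qed

section \<open>Quadrature rules with a reflection symmetry\<close>

definition reflection_symmetric ::
    "('p \<Rightarrow> 'p) \<Rightarrow> nat set \<Rightarrow> (nat \<Rightarrow> 'p) \<Rightarrow> (nat \<Rightarrow> real) \<Rightarrow> bool" where
  "reflection_symmetric R A P w \<longleftrightarrow>
     (\<forall>k\<in>A. (\<exists>!j. j \<in> A \<and> P j = R (P k)) \<and> (\<forall>j\<in>A. P j = R (P k) \<longrightarrow> w j = w k))"

text \<open>For an involution R the partner map is a bijection of the index set, so a symmetric
  quadrature sum does not change when the integrand is composed with R.\<close>
lemma reflection_symmetric_sum:
  assumes inv: "\<And>p. R (R p) = p"
    and sym: "reflection_symmetric R A P w"
  shows "(\<Sum>k\<in>A. F (w k) (P k)) = (\<Sum>k\<in>A. F (w k) (R (P k)))"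
proof -
  have partner: "(\<exists>!j. j \<in> A \<and> P j = R (P k)) \<and> (\<forall>j\<in>A. P j = R (P k) \<longrightarrow> w j = w k)"
    if "k \<in> A" for k
    using sym that unfolding reflection_symmetric_def by blast
  have nodes_inj: "k = k'" if k: "k \<in> A" "k' \<in> A" "P k = P k'" for k k'
  proof -
    from partner[OF k(1)] obtain j where j: "j \<in> A" "P j = R (P k)" by blast
    have "R (P j) = P k" using j inv by simp
    with partner[OF j(1)] k show "k = k'" by metis
  qed
  define \<sigma> where "\<sigma> k = (THE j. j \<in> A \<and> P j = R (P k))" for k
  have \<sigma>: "\<sigma> k \<in> A \<and> P (\<sigma> k) = R (P k)" if "k \<in> A" for k
    unfolding \<sigma>_def using partner[OF that] by (metis (mono_tags, lifting) theI')
  have \<sigma>_involution: "\<sigma> (\<sigma> k) = k" if "k \<in> A" for k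
    using \<sigma>[OF that] \<sigma>[of "\<sigma> k"] nodes_inj[of "\<sigma> (\<sigma> k)" k] inv that by auto
  have bij: "bij_betw \<sigma> A A"
    by (rule bij_betw_byWitness[where f'=\<sigma>]) (use \<sigma> \<sigma>_involution in auto)
  have weight: "w (\<sigma> k) = w k" if "k \<in> A" for k
    using partner[OF that] \<sigma>[OF that] by blast
  have "(\<Sum>k\<in>A. F (w k) (P k)) = (\<Sum>k\<in>A. F (w (\<sigma> k)) (P (\<sigma> k)))"
    using sum.reindex_bij_betw[OF bij, of "\<lambda>k. F (w k) (P k)"] by simp
  also have "\<dots> = (\<Sum>k\<in>A. F (w k) (R (P k)))"
    by (rule sum.cong) (simp_all add: \<sigma> weight)
  finally show ?thesis .
qed

lemma Rz_involution: "Rz (Rz p) = p" by (cases p) (simp add: Rz_def)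
lemma Rx_involution: "Rx (Rx p) = p" by (cases p) (simp add: Rx_def)

lemma harm_cart_moment_Rz:
  fixes n m :: nat
  assumes "reflection_symmetric Rz A P w"
  defines "T \<equiv> (\<Sum>k\<in>A. complex_of_real (w k) * harm_cart n m (P k))"
  shows "T = (-1)^m * T"
proof -
  have "T = (\<Sum>k\<in>A. complex_of_real (w k) * harm_cart n m (Rz (P k)))"
    unfolding T_def
    by (rule reflection_symmetric_sum[OF Rz_involution assms(1),
          where F = "\<lambda>a p. complex_of_real a * harm_cart n m p"])
  also have "\<dots> = (-1)^m * T"
    unfolding T_def harm_cart_Rz sum_distrib_left by (simp add: algebra_simps)
  finally show ?thesis .
qed

lemma harm_cart_moment_Rx:
  fixes n m :: nat
  assumes "reflection_symmetric Rx A P w"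
  defines "T \<equiv> (\<Sum>k\<in>A. complex_of_real (w k) * harm_cart n m (P k))"
  shows "T = (-1)^(n + m) * cnj T"
proof -
  have "T = (\<Sum>k\<in>A. complex_of_real (w k) * harm_cart n m (Rx (P k)))"
    unfolding T_def
    by (rule reflection_symmetric_sum[OF Rx_involution assms(1),
          where F = "\<lambda>a p. complex_of_real a * harm_cart n m p"])
  also have "\<dots> = (-1)^(n + m) * cnj T"
    unfolding T_def harm_cart_Rx by (simp add: sum_distrib_left algebra_simps)
  finally show ?thesis .
qed

text \<open>A complex number with the two reflection symmetries (real when m = 0) equals the exactness
  target iff the single real condition of the reduced system holds: odd m forces T = 0, even n + m
  forces T to be real and odd n forces T to be imaginary.\<close>
lemma symmetric_moment_iff:
  fixes T :: complex and c :: real and n m :: nat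
  assumes z_sym: "T = (-1)^m * T"
    and x_sym: "T = (-1)^(n + m) * cnj T"
    and zonal: "m = 0 \<Longrightarrow> Im T = 0"
  shows "T = (if n = 0 \<and> m = 0 then complex_of_real c else 0) \<longleftrightarrow>
           (even n \<and> even m \<longrightarrow> Re T = (if n = 0 \<and> m = 0 then c else 0)) \<and>
           (odd n \<and> even m \<and> 0 < m \<longrightarrow> Im T = 0)"
proof (cases "even m")
  case False
  then show ?thesis using z_sym by auto
next
  case even_m: True
  show ?thesis
  proof (cases "even n")
    case True
    then have "Im T = 0" using x_sym even_m by (simp add: complex_eq_iff)
    then show ?thesis using True even_m by (simp add: complex_eq_iff)
  next
    case False
    then have "n \<noteq> 0" by (metis dvd_0_right)
    moreover have "Re T = 0" using x_sym even_m False by (simp add: complex_eq_iff)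
    ultimately show ?thesis using False even_m zonal by (auto simp: complex_eq_iff)
  qed
qed

lemma exactness_nonneg_orders:
  fixes S :: "nat \<Rightarrow> int \<Rightarrow> complex" and c :: complex
  assumes conj_sym: "\<And>n m. S n (- int m) = (-1)^m * cnj (S n (int m))"
  shows "(\<forall>n m. n \<le> N \<and> \<bar>m\<bar> \<le> int n \<longrightarrow> S n m = (if n = 0 \<and> m = 0 then c else 0)) \<longleftrightarrow>
         (\<forall>n m. n \<le> N \<and> m \<le> n \<longrightarrow> S n (int m) = (if n = 0 \<and> m = 0 then c else 0))"
proof
  assume "\<forall>n m. n \<le> N \<and> m \<le> n \<longrightarrow> S n (int m) = (if n = 0 \<and> m = 0 then c else 0)"
  then have nonneg: "S n (int m) = (if n = 0 \<and> m = 0 then c else 0)" if "n \<le> N" "m \<le> n" for n m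
    using that by blast
  show "\<forall>n m. n \<le> N \<and> \<bar>m\<bar> \<le> int n \<longrightarrow> S n m = (if n = 0 \<and> m = 0 then c else 0)"
  proof (intro allI impI)
    fix n :: nat and m :: int
    assume bounds: "n \<le> N \<and> \<bar>m\<bar> \<le> int n"
    show "S n m = (if n = 0 \<and> m = 0 then c else 0)"
    proof (cases "m \<ge> 0")
      case True
      then obtain m' where "m = int m'" using nonneg_int_cases by blast
      then show ?thesis using nonneg[of n m'] bounds by simp
    next
      case False
      then have "m = - int (nat (- m))" "nat (- m) \<noteq> 0" by simp_all
      then show ?thesis
        using conj_sym[of n "nat (- m)"] nonneg[of n "nat (- m)"] bounds by auto
    qed
  qed
qed force

lemma reduced_system_nat_orders:
  fixes R I :: "nat \<Rightarrow> int \<Rightarrow> bool"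
  shows "((\<forall>n m. even n \<and> even m \<and> 0 \<le> m \<and> m \<le> int n \<and> n \<le> N \<longrightarrow> R n m) \<and>
          (\<forall>n m. odd n \<and> even m \<and> 0 < m \<and> m \<le> int n \<and> n \<le> N \<longrightarrow> I n m)) \<longleftrightarrow>
         (\<forall>n (m::nat). n \<le> N \<and> m \<le> n \<longrightarrow>
            (even n \<and> even m \<longrightarrow> R n (int m)) \<and> (odd n \<and> even m \<and> 0 < m \<longrightarrow> I n (int m)))"
  (is "?int_orders \<longleftrightarrow> ?nat_orders")
proof
  assume ?nat_orders
  then have nat_R: "even n \<and> even m \<Longrightarrow> R n (int m)"
    and nat_I: "odd n \<and> even m \<and> 0 < m \<Longrightarrow> I n (int m)"
    if "n \<le> N" "m \<le> n" for n m
    using that by auto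
  show ?int_orders
  proof (intro conjI allI impI)
    fix n m assume "even n \<and> even m \<and> 0 \<le> m \<and> m \<le> int n \<and> n \<le> N"
    then show "R n m" using nat_R[of n "nat m"] by (simp add: even_nat_iff nat_le_iff)
  next
    fix n m assume "odd n \<and> even m \<and> 0 < m \<and> m \<le> int n \<and> n \<le> N"
    then show "I n m" using nat_I[of n "nat m"] by (simp add: even_nat_iff nat_le_iff)
  qed
qed auto

theorem theorem1:
  fixes N K :: nat and w \<theta> \<phi> :: "nat \<Rightarrow> real"
  assumes coords: "\<And>k. k \<in> {1..K} \<Longrightarrow> 0 \<le> \<theta> k \<and> \<theta> k \<le> pi \<and> 0 \<le> \<phi> k \<and> \<phi> k < 2 * pi"
    and symz: "\<And>k. k \<in> {1..K} \<Longrightarrow>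
        (\<exists>!j. j \<in> {1..K} \<and> sph_point (\<theta> j) (\<phi> j) = Rz (sph_point (\<theta> k) (\<phi> k)))
        \<and> (\<forall>j\<in>{1..K}. sph_point (\<theta> j) (\<phi> j) = Rz (sph_point (\<theta> k) (\<phi> k)) \<longrightarrow> w j = w k)"
    and symx: "\<And>k. k \<in> {1..K} \<Longrightarrow>
        (\<exists>!j. j \<in> {1..K} \<and> sph_point (\<theta> j) (\<phi> j) = Rx (sph_point (\<theta> k) (\<phi> k)))
        \<and> (\<forall>j\<in>{1..K}. sph_point (\<theta> j) (\<phi> j) = Rx (sph_point (\<theta> k) (\<phi> k)) \<longrightarrow> w j = w k)"
  shows "(\<forall>n m. n \<le> N \<and> \<bar>m\<bar> \<le> int n \<longrightarrow>
            (\<Sum>k\<in>{1..K}. complex_of_real (w k) * sph_harm n m (\<theta> k) (\<phi> k))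
              = (if n = 0 \<and> m = 0 then complex_of_real (sqrt (4 * pi)) else 0))
    \<longleftrightarrow>
         ((\<forall>n m. even n \<and> even m \<and> 0 \<le> m \<and> m \<le> int n \<and> n \<le> N \<longrightarrow>
            Re (\<Sum>k\<in>{1..K}. complex_of_real (w k) * sph_harm n m (\<theta> k) (\<phi> k))
              = (if n = 0 \<and> m = 0 then sqrt (4 * pi) else 0))
          \<and> (\<forall>n m. odd n \<and> even m \<and> 0 < m \<and> m \<le> int n \<and> n \<le> N \<longrightarrow>
            Im (\<Sum>k\<in>{1..K}. complex_of_real (w k) * sph_harm n m (\<theta> k) (\<phi> k)) = 0))"
proof -
  define P where "P k = sph_point (\<theta> k) (\<phi> k)" for k
  define S where "S n m = (\<Sum>k\<in>{1..K}. complex_of_real (w k) * sph_harm n m (\<theta> k) (\<phi> k))" for n m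
  have cart: "S n (int m) = (\<Sum>k\<in>{1..K}. complex_of_real (w k) * harm_cart n m (P k))" for n m
    unfolding S_def P_def by (rule sum.cong) (use coords sph_harm_eq_harm_cart in auto)
  have sym_z: "reflection_symmetric Rz {1..K} P w" and sym_x: "reflection_symmetric Rx {1..K} P w"
    unfolding reflection_symmetric_def P_def using symz symx by blast+
  have moment: "S n (int m) = (if n = 0 \<and> m = 0 then complex_of_real (sqrt (4 * pi)) else 0) \<longleftrightarrow>
      (even n \<and> even m \<longrightarrow> Re (S n (int m)) = (if n = 0 \<and> m = 0 then sqrt (4 * pi) else 0)) \<and>
      (odd n \<and> even m \<and> 0 < m \<longrightarrow> Im (S n (int m)) = 0)" for n m
    unfolding cart
    using harm_cart_moment_Rz[OF sym_z, of n m] harm_cart_moment_Rx[OF sym_x, of n m]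
    by (rule symmetric_moment_iff) (simp add: harm_cart_order0_real)
  have conj_sym: "S n (- int m) = (-1)^m * cnj (S n (int m))" for n m
    unfolding S_def sph_harm_neg_order cnj_sum sum_distrib_left by (simp add: algebra_simps)
  show ?thesis
    unfolding S_def[symmetric] exactness_nonneg_orders[of S, OF conj_sym]
      reduced_system_nat_orders moment by (simp only: of_nat_eq_0_iff)
qed

end
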